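(* Let $G$ be a finite group, let $K$ be a normal solvable subgroup of $G$, and let $p \in \pi(G)$. If $d_G(p) < |H(p,G)|$, then $p \notin \pi(K)$.
   Context: For a finite group $X$, $\pi(X)$ is the set of prime divisors of $|X|$, and for a positive integer $a$, $\pi(a)$ is the set of prime divisors of $a$. The prime graph $GK(G)$ of $G$ has vertex set $\pi(G)$, with distinct vertices $p,q$ adjacent iff $G$ contains an element of order $pq$; $d_G(p)$ denotes the degree of the vertex $p$ in $GK(G)$. For $p \in \pi(G)$, $w_G(p) = \max\{ i : p^i \mid |G|\}$. For $p\in\pi(G)$ with $m = w_G(p)$, define $$\theta(p) = \pi(G) \setminus \Big(\{p\} \cup \bigcup_{i=1}^{m} \pi(p^i-1)\Big), \qquad \bar\theta(p) = \pi(G)\setminus\big(\{p\}\cup \pi(p^m-1)\big),$$ and $$H(p,G) = \{ q \in \theta(p) \;:\; p \in \bar\theta(q)\}.$$ *)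

theory Defs
  imports "HOL-Algebra.Algebra" "HOL-Computational_Algebra.Primes"
begin

definition pi_num :: "nat \<Rightarrow> nat set" where
  "pi_num a = {p. Factorial_Ring.prime p \<and> p dvd a}"

definition pi_grp :: "('a, 'b) monoid_scheme \<Rightarrow> nat set" where
  "pi_grp G = pi_num (order G)"

definition gk_adj :: "('a, 'b) monoid_scheme \<Rightarrow> nat \<Rightarrow> nat \<Rightarrow> bool" where
  "gk_adj G p q \<longleftrightarrow> p \<in> pi_grp G \<and> q \<in> pi_grp G \<and> p \<noteq> q \<and>
     (\<exists>x \<in> carrier G. group.ord G x = p * q)"

definition gk_deg :: "('a, 'b) monoid_scheme \<Rightarrow> nat \<Rightarrow> nat" where
  "gk_deg G p = card {q. gk_adj G p q}"

definition w_grp :: "('a, 'b) monoid_scheme \<Rightarrow> nat \<Rightarrow> nat" where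
  "w_grp G p = multiplicity p (order G)"

definition theta :: "('a, 'b) monoid_scheme \<Rightarrow> nat \<Rightarrow> nat set" where
  "theta G p = pi_grp G - ({p} \<union> (\<Union>i\<in>{1..w_grp G p}. pi_num (p ^ i - 1)))"

definition theta_bar :: "('a, 'b) monoid_scheme \<Rightarrow> nat \<Rightarrow> nat set" where
  "theta_bar G p = pi_grp G - ({p} \<union> pi_num (p ^ w_grp G p - 1))"

definition H_set :: "('a, 'b) monoid_scheme \<Rightarrow> nat \<Rightarrow> nat set" where
  "H_set G p = {q \<in> theta G p. p \<in> theta_bar G q}"

end

theory Submission
  imports Defs
begin

(* Let q be in H(p,G) and suppose p divides |K|.  We show that G has an element of order p q;
   then H(p,G) lies in the neighbourhood of p in GK(G), so |H(p,G)| <= d_G(p).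

   The terms of the derived series of K are normal in G and the series reaches 1, so some
   L normal in G has p dividing |L : M| with M = L'.  If q divides |G : M|, a Sylow q-subgroup
   of G/M normalizes the Sylow p-subgroup P of the abelian normal subgroup L/M; as
   q does not divide p^i - 1 for i <= w_G(p), counting fixed points mod q shows that it
   centralizes some element of P other than 1.  If q does not divide |G : M|, a Sylow
   q-subgroup T of M is a Sylow q-subgroup of G, the Frattini argument G = M N_G(T) gives
   p | |N_G(T)|, and as p does not divide q^(w_G(q)) - 1, a Sylow p-subgroup of N_G(T)
   centralizes some element of T other than 1.  In both cases suitable powers give commuting
   elements of orders p and q, whose product has order p q; in the first case this element of
   G/M lifts to one of the same order in G, namely a power of any preimage. *)

(* The ASCII syntax of multiset inclusion would clash with the coset notation g <# H. *)
no_notation (ASCII) subset_mset (infix "<#" 50)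

section \<open>Orders of elements and Sylow subgroups\<close>

context group
begin

lemma ord_mult_coprime:
  assumes x: "x \<in> carrier G" and y: "y \<in> carrier G" and comm: "x \<otimes> y = y \<otimes> x"
    and cop: "coprime (ord x) (ord y)"
  shows "ord (x \<otimes> y) = ord x * ord y"
proof -
  have ord_dvd: "ord a dvd ord (a \<otimes> b)"
    if a: "a \<in> carrier G" and b: "b \<in> carrier G" and ab: "a \<otimes> b = b \<otimes> a"
      and cop_ab: "coprime (ord a) (ord b)" for a b
  proof -
    define n where "n = ord (a \<otimes> b)"
    have "a [^] n \<otimes> b [^] n = \<one>"
      using a b by (simp add: n_def flip: pow_mult_distrib[OF ab a b])
    then have an: "a [^] n = inv (b [^] n)"
      using a b by (simp add: inv_equality)
    have "a [^] (n * ord b) = (a [^] n) [^] ord b"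
      using a by (simp add: nat_pow_pow)
    also have "\<dots> = inv ((b [^] n) [^] ord b)"
      using an b by (simp add: nat_pow_inv)
    also have "(b [^] n) [^] ord b = (b [^] ord b) [^] n"
      using b by (simp only: nat_pow_pow mult.commute)
    finally have "a [^] (n * ord b) = \<one>"
      using b by simp
    then have "ord a dvd n * ord b"
      using a pow_eq_id by blast
    then show ?thesis
      using cop_ab by (simp add: n_def coprime_dvd_mult_left_iff)
  qed
  have "ord x dvd ord (x \<otimes> y)"
    using ord_dvd[OF x y comm cop] .
  moreover have "ord y dvd ord (x \<otimes> y)"
    using ord_dvd[OF y x comm[symmetric]] cop comm by (simp add: coprime_commute)
  ultimately have "ord x * ord y dvd ord (x \<otimes> y)"
    using cop by (simp add: divides_mult)
  then show ?thesis
    using ord_mul_divides[OF comm x y] by (simp add: dvd_antisym)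
qed

lemma exists_pow_ord_prime:
  assumes x: "x \<in> carrier G" "x \<noteq> \<one>" and r: "Factorial_Ring.prime r" and "x [^] (r ^ k) = \<one>"
  obtains m :: nat where "ord (x [^] m) = r"
proof -
  have "ord x dvd r ^ k"
    using assms pow_eq_id by blast
  then obtain i where i: "ord x = r ^ i"
    using divides_primepow_nat[OF r] by auto
  with x have "i \<noteq> 0"
    using ord_eq_1 by (metis power_0)
  then have "ord (x [^] (r ^ (i - 1))) = r"
    using ord_pow[OF x(1)] i r by (simp add: le_imp_power_dvd power_diff_power_eq prime_gt_0_nat)
  then show thesis
    by (rule that)
qed

lemma subgroup_nat_pow_closed:
  assumes "subgroup H G" "h \<in> H"
  shows "h [^] (n :: nat) \<in> H"
  by (induction n) (simp_all add: assms subgroup.one_closed subgroup.m_closed)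

lemma subgroup_pow_card_eq_one:
  assumes "subgroup H G" "finite H" "h \<in> H"
  shows "h [^] card H = \<one>"
  using group.pow_order_eq_1[OF subgroup_imp_group[OF assms(1)], of h] assms(3)
  by (simp add: order_def flip: nat_pow_consistent)

lemma card_subgroup_dvd:
  assumes "subgroup H G" "subgroup K G" "K \<subseteq> H"
  shows "card K dvd card H"
proof -
  have "card (rcosets\<^bsub>G\<lparr>carrier := H\<rparr>\<^esub> K) * card K = card H"
    using group.lagrange[OF subgroup_imp_group[OF assms(1)] subgroup_incl[OF assms(2,1,3)]]
    by (simp add: order_def)
  then show ?thesis
    by (metis dvd_triv_right)
qed

lemma card_subgroup_ne_zero:
  assumes "finite (carrier G)" "subgroup H G"
  shows "card H \<noteq> 0"
  using assms subgroup.subset finite_subset subgroup.one_closed by (metis card_0_eq empty_iff)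

lemma lagrange_relative:
  assumes M: "subgroup M G" and L: "subgroup L G" and "M \<subseteq> L"
  shows "card ((\<lambda>a. M #> a) ` L) * card M = card L"
proof -
  interpret L: group "G\<lparr>carrier := L\<rparr>"
    using subgroup_imp_group[OF L] .
  have "rcosets\<^bsub>G\<lparr>carrier := L\<rparr>\<^esub> M = (\<lambda>a. M #> a) ` L"
    by (auto simp: RCOSETS_def r_coset_def)
  then show ?thesis
    using L.lagrange[OF subgroup_incl[OF M L \<open>M \<subseteq> L\<close>]] by (simp add: order_def)
qed

lemma exists_sylow_subgroup:
  assumes fin: "finite (carrier G)" and H: "subgroup H G" and r: "Factorial_Ring.prime r"
  obtains S where "subgroup S G" "S \<subseteq> H" "card S = r ^ multiplicity r (card H)"
proof -
  interpret H: group "G\<lparr>carrier := H\<rparr>"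
    using subgroup_imp_group[OF H] .
  have "finite H"
    using fin H subgroup.subset finite_subset by blast
  moreover have "order (G\<lparr>carrier := H\<rparr>) = r ^ multiplicity r (card H) * (card H div r ^ multiplicity r (card H))"
    by (simp add: order_def multiplicity_dvd)
  ultimately obtain S where S: "subgroup S (G\<lparr>carrier := H\<rparr>)" "card S = r ^ multiplicity r (card H)"
    using sylow_thm[OF r H.is_group] by auto
  moreover have "S \<subseteq> H"
    using subgroup.subset[OF S(1)] by simp
  ultimately show thesis
    using that incl_subgroup[OF H] by blast
qed

lemma cauchy_subgroup:
  assumes fin: "finite (carrier G)" and H: "subgroup H G" and r: "Factorial_Ring.prime r" and dvd: "r dvd card H"
  obtains x where "x \<in> H" "ord x = r"
proof -
  obtain S where S: "subgroup S G" "S \<subseteq> H" and card_S: "card S = r ^ multiplicity r (card H)"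
    using exists_sylow_subgroup[OF fin H r] by blast
  have "finite S"
    using fin S(1) subgroup.subset finite_subset by blast
  have "multiplicity r (card H) \<noteq> 0"
    using card_subgroup_ne_zero[OF fin H] dvd r by (simp add: prime_multiplicity_gt_zero_iff)
  then have "card S \<noteq> 1"
    using card_S prime_gt_1_nat[OF r] by simp
  then have "S \<noteq> {\<one>}"
    by auto
  then obtain x where x: "x \<in> S" "x \<noteq> \<one>"
    using subgroup.one_closed[OF S(1)] by blast
  then have "x [^] (r ^ multiplicity r (card H)) = \<one>"
    using subgroup_pow_card_eq_one[OF S(1) \<open>finite S\<close>] card_S by simp
  then obtain m :: nat where "ord (x [^] m) = r"
    by (rule exists_pow_ord_prime[OF subgroup.mem_carrier[OF S(1) x(1)] x(2) r])
  moreover have "x [^] m \<in> H"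
    using subgroup_nat_pow_closed[OF S(1) x(1)] S(2) by blast
  ultimately show thesis
    using that by blast
qed

end

section \<open>Quotient maps\<close>

lemma (in normal) group_hom_rcoset: "group_hom G (G Mod H) (\<lambda>a. H #> a)"
  by (rule group_hom.intro[OF is_group factorgroup_is_group group_hom_axioms.intro[OF r_coset_hom_Mod]])

lemma (in normal) FactGroup_image_commute:
  assumes L: "subgroup L G" and derived: "derived G L \<subseteq> H"
    and "C \<in> (\<lambda>a. H #> a) ` L" and "D \<in> (\<lambda>a. H #> a) ` L"
  shows "C \<otimes>\<^bsub>G Mod H\<^esub> D = D \<otimes>\<^bsub>G Mod H\<^esub> C"
proof -
  obtain a b where a: "a \<in> L" "C = H #> a" and b: "b \<in> L" "D = H #> b"
    using assms(3,4) by blast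
  have aG: "a \<in> carrier G" and bG: "b \<in> carrier G"
    using a b L subgroup.subset by auto
  define c where "c = a \<otimes> b \<otimes> inv a \<otimes> inv b"
  have "c \<in> derived G L"
    unfolding c_def derived_def using a(1) b(1) by (blast intro: generate.incl)
  then have cH: "c \<in> H"
    using derived by blast
  have "inv b \<otimes> (b \<otimes> a) = a"
    using aG bG by (simp add: m_assoc[symmetric])
  then have "a \<otimes> b = c \<otimes> (b \<otimes> a)"
    using aG bG by (simp add: c_def m_assoc)
  then have "H #> (a \<otimes> b) = H #> (b \<otimes> a)"
    using cH aG bG subset by (simp add: coset_mult_assoc[symmetric] rcos_const[OF is_group] subsetD)
  then show ?thesis
    using a(2) b(2) aG bG by (simp add: rcos_sum)
qed

lemma (in group_hom) order_dvd_of_surj: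
  assumes "h ` carrier G = carrier H"
  shows "order H dvd order G"
proof -
  have "card (rcosets kernel G H h) = order H"
    using iso_same_card[OF FactGroup_iso[OF assms]] by (simp add: FactGroup_def order_def)
  then show ?thesis
    using G.lagrange[OF subgroup_kernel] by (metis dvd_triv_left)
qed

lemma (in group_hom) exists_ord_eq_ord_image:
  assumes fin: "finite (carrier G)" and g: "g \<in> carrier G"
  obtains x where "x \<in> carrier G" "G.ord x = H.ord (h g)"
proof -
  have "h g [^]\<^bsub>H\<^esub> G.ord g = \<one>\<^bsub>H\<^esub>"
    using g by (simp flip: hom_nat_pow)
  then have "H.ord (h g) dvd G.ord g"
    using g H.pow_eq_id by simp
  then obtain k where k: "G.ord g = H.ord (h g) * k"
    by blast
  moreover have "G.ord g \<noteq> 0"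
    using G.ord_ge_1[OF fin g] by simp
  ultimately have "k \<noteq> 0" "k dvd G.ord g"
    by auto
  then have "G.ord (g [^]\<^bsub>G\<^esub> k) = H.ord (h g)"
    using G.ord_pow[OF g] k by simp
  then show thesis
    using that g by blast
qed

section \<open>Actions of groups of prime power order\<close>

lemma group_actionI:
  assumes "group P"
    and closed: "\<And>g x. g \<in> carrier P \<Longrightarrow> x \<in> E \<Longrightarrow> \<phi> g x \<in> E"
    and one: "\<And>x. x \<in> E \<Longrightarrow> \<phi> \<one>\<^bsub>P\<^esub> x = x"
    and mult: "\<And>g h x. g \<in> carrier P \<Longrightarrow> h \<in> carrier P \<Longrightarrow> x \<in> E \<Longrightarrow>
                 \<phi> (g \<otimes>\<^bsub>P\<^esub> h) x = \<phi> g (\<phi> h x)"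
  shows "group_action P E (\<lambda>g. restrict (\<phi> g) E)"
proof -
  interpret P: group P by fact
  have inverse: "\<phi> (inv\<^bsub>P\<^esub> g) (\<phi> g x) = x" if "g \<in> carrier P" "x \<in> E" for g x
    using mult[of "inv\<^bsub>P\<^esub> g" g x] one[of x] that by simp
  have Bij: "restrict (\<phi> g) E \<in> Bij E" if g: "g \<in> carrier P" for g
  proof -
    have "bij_betw (\<phi> g) E E"
      by (rule bij_betwI[where g = "\<phi> (inv\<^bsub>P\<^esub> g)"])
        (use g closed inverse[of g] inverse[of "inv\<^bsub>P\<^esub> g"] in auto)
    then show ?thesis
      by (simp add: Bij_def)
  qed
  have "(\<lambda>g. restrict (\<phi> g) E) \<in> hom P (BijGroup E)"
  proof (rule homI)
    fix g h
    assume g: "g \<in> carrier P" and h: "h \<in> carrier P"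
    have "restrict (\<phi> (g \<otimes>\<^bsub>P\<^esub> h)) E = compose E (restrict (\<phi> g) E) (restrict (\<phi> h) E)"
      using g h closed mult by (auto simp: compose_def)
    then show "restrict (\<phi> (g \<otimes>\<^bsub>P\<^esub> h)) E = restrict (\<phi> g) E \<otimes>\<^bsub>BijGroup E\<^esub> restrict (\<phi> h) E"
      using Bij g h by (simp add: BijGroup_def)
  qed (use Bij in \<open>simp add: BijGroup_def\<close>)
  then show ?thesis
    unfolding group_action_def group_hom_def group_hom_axioms_def
    using P.is_group group_BijGroup by blast
qed

lemma (in group_action) prime_dvd_card_orbit:
  assumes r: "Factorial_Ring.prime r" and ord: "order G = r ^ a"
    and x: "x \<in> E" "orbit G \<phi> x \<noteq> {x}"
  shows "r dvd card (orbit G \<phi> x)"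
proof -
  have "card (orbit G \<phi> x) dvd r ^ a"
    using orbit_stabilizer_theorem[OF x(1)] ord by (metis dvd_triv_left)
  then obtain i where i: "card (orbit G \<phi> x) = r ^ i"
    using divides_primepow_nat[OF r] by auto
  have "card (orbit G \<phi> x) \<noteq> 1"
    using orbit_refl[OF x(1)] x(2) by (auto simp: card_1_singleton_iff)
  then show ?thesis
    using i by (cases i) auto
qed

lemma (in group_action) orbit_eq_of_mem:
  assumes x: "x \<in> E" and y: "y \<in> orbit G \<phi> x"
  shows "orbit G \<phi> y = orbit G \<phi> x"
proof -
  have in_E: "z \<in> E" if "z \<in> orbit G \<phi> w" "w \<in> E" for z w
    using that element_image unfolding orbit_def by blast
  have "y \<in> E" "x \<in> orbit G \<phi> y"
    using in_E[OF y x] orbit_sym[OF x _ y] by auto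
  then show ?thesis
    using orbit_trans[OF x] orbit_trans[OF \<open>y \<in> E\<close>] x y in_E by blast
qed

lemma (in group_action) prime_dvd_card_non_fixed_points:
  assumes fin: "finite E" and r: "Factorial_Ring.prime r" and ord: "order G = r ^ a"
  shows "r dvd card {x \<in> E. orbit G \<phi> x \<noteq> {x}}"
proof -
  define N where "N = {x \<in> E. orbit G \<phi> x \<noteq> {x}}"
  have "card N = (\<Sum>x\<in>E. if x \<in> N then 1 else 0)"
    using sum.inter_filter[OF fin, of "\<lambda>_. 1 :: nat" "\<lambda>x. x \<in> N"] by (simp add: N_def)
  also have "\<dots> = (\<Sum>orb\<in>orbits G E \<phi>. \<Sum>x\<in>orb. if x \<in> N then 1 else 0)"
    using disjoint_sum[OF fin] by metis
  also have "r dvd \<dots>"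
  proof (rule dvd_sum)
    fix orb
    assume "orb \<in> orbits G E \<phi>"
    then obtain x where x: "x \<in> E" and orb: "orb = orbit G \<phi> x"
      unfolding orbits_def by blast
    have orb_E: "orb \<subseteq> E"
      using orbits_coverture \<open>orb \<in> orbits G E \<phi>\<close> by blast
    have orbit_y: "orbit G \<phi> y = orb" if "y \<in> orb" for y
      using orbit_eq_of_mem[OF x] that orb by simp
    show "r dvd (\<Sum>y\<in>orb. if y \<in> N then 1 else 0)"
    proof (cases "orb = {x}")
      case True
      then show ?thesis
        using orb by (simp add: N_def)
    next
      case False
      have in_N: "y \<in> N" if y: "y \<in> orb" for y
      proof -
        have "orb \<noteq> {y}"
          using False y orbit_refl[OF x] orb by auto
        then show ?thesis
          using y orb_E orbit_y[OF y] by (auto simp: N_def)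
      qed
      have "(\<Sum>y\<in>orb. if y \<in> N then 1 else 0) = card orb"
        using in_N by (simp cong: sum.cong)
      then show ?thesis
        using prime_dvd_card_orbit[OF r ord x] False orb by simp
    qed
  qed
  finally show ?thesis
    by (simp add: N_def)
qed

lemma (in group_action) card_fixed_points_mod:
  assumes fin: "finite E" and r: "Factorial_Ring.prime r" and ord: "order G = r ^ a"
  shows "card {x \<in> E. \<forall>g \<in> carrier G. \<phi> g x = x} mod r = card E mod r"
proof -
  define F where "F = {x \<in> E. \<forall>g \<in> carrier G. \<phi> g x = x}"
  have "E - F = {x \<in> E. orbit G \<phi> x \<noteq> {x}}"
    using orbit_refl unfolding F_def orbit_def by blast
  then have "r dvd card (E - F)"
    using prime_dvd_card_non_fixed_points[OF fin r ord] by simp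
  moreover have "card E = card F + card (E - F)"
    using fin by (simp add: F_def card_Diff_subset card_mono)
  ultimately show ?thesis
    unfolding F_def[symmetric] by (elim dvdE) simp
qed

section \<open>Conjugation, Sylow conjugacy and the Frattini argument\<close>

context group
begin

lemma conjugate_eq_image: "g <# H #> inv g = (\<lambda>h. g \<otimes> h \<otimes> inv g) ` H"
  unfolding l_coset_def r_coset_def by auto

lemma card_conjugate:
  assumes "g \<in> carrier G" "H \<subseteq> carrier G"
  shows "card (g <# H #> inv g) = card H"
proof -
  have "inj_on (\<lambda>h. g \<otimes> h \<otimes> inv g) H"
    using assms conjugation_is_inj by (intro inj_onI) blast
  then show ?thesis
    by (simp add: conjugate_eq_image card_image)
qed

lemma conjugate_mult:
  assumes "g \<in> carrier G" "h \<in> carrier G" "H \<subseteq> carrier G"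
  shows "(g \<otimes> h) <# H #> inv (g \<otimes> h) = g <# (h <# H #> inv h) #> inv g"
proof -
  have "(g \<otimes> h) <# H #> inv (g \<otimes> h) = (\<lambda>x. g \<otimes> (h \<otimes> x \<otimes> inv h) \<otimes> inv g) ` H"
    unfolding conjugate_eq_image using assms
    by (intro image_cong) (auto simp: m_assoc inv_mult_group subsetD)
  then show ?thesis
    by (simp add: conjugate_eq_image image_image)
qed

lemma conj_eq_self_iff_commute:
  assumes "g \<in> carrier G" "x \<in> carrier G"
  shows "g \<otimes> x \<otimes> inv g = x \<longleftrightarrow> g \<otimes> x = x \<otimes> g"
  using assms inv_solve_right[of x "g \<otimes> x" g] by auto

lemma mem_normalizer_iff:
  assumes "H \<subseteq> carrier G"
  shows "g \<in> normalizer G H \<longleftrightarrow> g \<in> carrier G \<and> g <# H #> inv g = H"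
  using assms unfolding normalizer_def stabilizer_def by auto

lemma group_action_rcosets:
  assumes P: "subgroup P G" and Q: "subgroup Q G"
  shows "group_action (G\<lparr>carrier := Q\<rparr>) (rcosets P) (\<lambda>t. restrict (\<lambda>C. C #> inv t) (rcosets P))"
proof -
  have PG: "P \<subseteq> carrier G" and QG: "Q \<subseteq> carrier G"
    using P Q subgroup.subset by auto
  have CG: "C \<subseteq> carrier G" if "C \<in> rcosets P" for C
    using that rcosets_part_G[OF P] by blast
  show ?thesis
  proof (rule group_actionI)
    show "group (G\<lparr>carrier := Q\<rparr>)"
      using subgroup_imp_group[OF Q] .
  next
    fix t C
    assume t: "t \<in> carrier (G\<lparr>carrier := Q\<rparr>)" and "C \<in> rcosets P"
    then obtain g where g: "g \<in> carrier G" "C = P #> g"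
      unfolding RCOSETS_def by blast
    have "C #> inv t = P #> (g \<otimes> inv t)"
      using t g QG PG by (auto simp: coset_mult_assoc)
    then show "C #> inv t \<in> rcosets P"
      using t g QG rcosetsI[OF PG] by auto
  next
    fix C
    assume "C \<in> rcosets P"
    then show "C #> inv \<one>\<^bsub>G\<lparr>carrier := Q\<rparr>\<^esub> = C"
      using CG by simp
  next
    fix s t C
    assume "s \<in> carrier (G\<lparr>carrier := Q\<rparr>)" "t \<in> carrier (G\<lparr>carrier := Q\<rparr>)" "C \<in> rcosets P"
    then show "C #> inv (s \<otimes>\<^bsub>G\<lparr>carrier := Q\<rparr>\<^esub> t) = C #> inv t #> inv s"
      using CG QG by (simp add: coset_mult_assoc inv_mult_group subsetD)
  qed
qed

lemma group_action_conjugation: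
  assumes R: "subgroup R G" and SG: "S \<subseteq> carrier G" and normalizes: "R \<subseteq> normalizer G S"
  shows "group_action (G\<lparr>carrier := R\<rparr>) S (\<lambda>g. restrict (\<lambda>t. g \<otimes> t \<otimes> inv g) S)"
proof (rule group_actionI)
  show "group (G\<lparr>carrier := R\<rparr>)"
    using subgroup_imp_group[OF R] .
next
  fix g t
  assume "g \<in> carrier (G\<lparr>carrier := R\<rparr>)" and t: "t \<in> S"
  then have "g \<in> normalizer G S"
    using normalizes by auto
  then have "g <# S #> inv g = S"
    using SG by (simp add: mem_normalizer_iff)
  then show "g \<otimes> t \<otimes> inv g \<in> S"
    using t unfolding conjugate_eq_image by blast
next
  fix t
  assume "t \<in> S"
  then show "\<one>\<^bsub>G\<lparr>carrier := R\<rparr>\<^esub> \<otimes> t \<otimes> inv \<one>\<^bsub>G\<lparr>carrier := R\<rparr>\<^esub> = t"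
    using SG by (simp add: subsetD)
next
  fix g h t
  assume "g \<in> carrier (G\<lparr>carrier := R\<rparr>)" "h \<in> carrier (G\<lparr>carrier := R\<rparr>)" "t \<in> S"
  then have "g \<in> carrier G" "h \<in> carrier G" "t \<in> carrier G"
    using subgroup.subset[OF R] SG by auto
  then show "g \<otimes>\<^bsub>G\<lparr>carrier := R\<rparr>\<^esub> h \<otimes> t \<otimes> inv (g \<otimes>\<^bsub>G\<lparr>carrier := R\<rparr>\<^esub> h)
      = g \<otimes> (h \<otimes> t \<otimes> inv h) \<otimes> inv g"
    by (simp add: m_assoc inv_mult_group)
qed

lemma not_dvd_card_rcosets_sylow:
  assumes fin: "finite (carrier G)" and r: "Factorial_Ring.prime r"
    and P: "subgroup P G" "card P = r ^ multiplicity r (order G)"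
  shows "\<not> r dvd card (rcosets P)"
proof -
  have "order G \<noteq> 0"
    using fin by (simp add: order_gt_0_iff_finite[symmetric])
  moreover have "\<not> is_unit r"
    using r not_prime_unit by blast
  moreover have "card (rcosets P) = order G div r ^ multiplicity r (order G)"
    using lagrange[OF P(1)] P(2) prime_gt_0_nat[OF r] by (metis nonzero_mult_div_cancel_right power_not_zero neq0_conv)
  ultimately show ?thesis
    using multiplicity_decompose by metis
qed

lemma sylow_conjugate_subset:
  assumes fin: "finite (carrier G)" and r: "Factorial_Ring.prime r"
    and P: "subgroup P G" "card P = r ^ multiplicity r (order G)"
    and Q: "subgroup Q G" "card Q = r ^ k"
  obtains g where "g \<in> carrier G" "g <# Q #> inv g \<subseteq> P"
proof -
  have PG: "P \<subseteq> carrier G" and QG: "Q \<subseteq> carrier G"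
    using P(1) Q(1) subgroup.subset by auto
  interpret action: group_action "G\<lparr>carrier := Q\<rparr>" "rcosets P" "\<lambda>t. restrict (\<lambda>C. C #> inv t) (rcosets P)"
    using group_action_rcosets[OF P(1) Q(1)] .
  have "finite (rcosets P)"
    using fin rcosets_part_G[OF P(1)] finite_UnionD by metis
  then have "card {C \<in> rcosets P. \<forall>t \<in> Q. C #> inv t = C} mod r = card (rcosets P) mod r"
    using action.card_fixed_points_mod[OF _ r, of k] Q(2) by (simp add: order_def cong: conj_cong)
  also have "\<dots> \<noteq> 0"
    using not_dvd_card_rcosets_sylow[OF fin r P] by (simp add: mod_eq_0_iff_dvd)
  finally have "{C \<in> rcosets P. \<forall>t \<in> Q. C #> inv t = C} \<noteq> {}"
    by (metis card.empty mod_0)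
  then obtain C where C: "C \<in> rcosets P" "\<forall>t \<in> Q. C #> inv t = C"
    by blast
  then obtain g where g: "g \<in> carrier G" and C_eq: "C = P #> g"
    unfolding RCOSETS_def by blast
  have "g \<otimes> t \<otimes> inv g \<in> P" if t: "t \<in> Q" for t
  proof -
    have "g \<otimes> t \<in> P #> g #> t"
      using rcosI[OF rcos_self[OF g P(1)] r_coset_subset_G[OF PG g]] t QG by blast
    also have "P #> g #> t = P #> g"
      using C(2) C_eq subgroup.m_inv_closed[OF Q(1) t] t QG by (metis inv_inv subsetD)
    finally show ?thesis
      using subgroup.rcos_module_imp[OF P(1) is_group g] by simp
  qed
  then show thesis
    using that g by (auto simp: conjugate_eq_image)
qed

lemma sylow_conjugate_subset_in_subgroup:
  assumes fin: "finite (carrier G)" and r: "Factorial_Ring.prime r" and H: "subgroup H G"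
    and P: "subgroup P G" "P \<subseteq> H" "card P = r ^ multiplicity r (card H)"
    and Q: "subgroup Q G" "Q \<subseteq> H" "card Q = r ^ k"
  obtains h where "h \<in> H" "h <# Q #> inv h \<subseteq> P"
proof -
  interpret H: group "G\<lparr>carrier := H\<rparr>"
    using subgroup_imp_group[OF H] .
  have "finite (carrier (G\<lparr>carrier := H\<rparr>))"
    using fin H subgroup.subset finite_subset by fastforce
  then obtain h where h: "h \<in> H"
    and "h <#\<^bsub>G\<lparr>carrier := H\<rparr>\<^esub> Q #>\<^bsub>G\<lparr>carrier := H\<rparr>\<^esub> inv\<^bsub>G\<lparr>carrier := H\<rparr>\<^esub> h \<subseteq> P"
    using H.sylow_conjugate_subset[OF _ r subgroup_incl[OF P(1) H P(2)] _ subgroup_incl[OF Q(1) H Q(2)] Q(3)] P(3)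
    by (auto simp: order_def)
  moreover have "inv\<^bsub>G\<lparr>carrier := H\<rparr>\<^esub> h = inv h"
    using m_inv_consistent[OF H h] .
  ultimately show thesis
    using that by (simp add: l_coset_def r_coset_def)
qed

lemma normalizer_sylow_of_abelian_normal:
  assumes fin: "finite (carrier G)" and A: "A \<lhd> G"
    and comm: "\<And>a b. a \<in> A \<Longrightarrow> b \<in> A \<Longrightarrow> a \<otimes> b = b \<otimes> a"
    and r: "Factorial_Ring.prime r"
    and P: "subgroup P G" "P \<subseteq> A" "card P = r ^ multiplicity r (card A)"
  shows "normalizer G P = carrier G"
proof -
  have AS: "subgroup A G"
    using A normal_imp_subgroup by blast
  have PG: "P \<subseteq> carrier G"
    using P(1) subgroup.subset by blast
  have "g \<in> normalizer G P" if g: "g \<in> carrier G" for g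
  proof -
    define P' where "P' = g <# P #> inv g"
    have P'A: "P' \<subseteq> A"
      using P(2) g normal.inv_op_closed2[OF A] by (auto simp: P'_def conjugate_eq_image)
    have card_P': "card P' = card P"
      using card_conjugate[OF g PG] by (simp add: P'_def)
    obtain a where a: "a \<in> A" and "a <# P' #> inv a \<subseteq> P"
      using sylow_conjugate_subset_in_subgroup[OF fin r AS P
          subgroup_conjugation_is_surj2[OF g P(1), folded P'_def] P'A card_P'[unfolded P(3)]] .
    moreover have "a <# P' #> inv a = P'"
    proof -
      have AG: "A \<subseteq> carrier G"
        using AS subgroup.subset by blast
      have "a \<otimes> x \<otimes> inv a = x" if x: "x \<in> P'" for x
        using conj_eq_self_iff_commute[of a x] comm[OF a, of x] a x P'A AG by (simp add: subsetD)
      then show ?thesis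
        by (simp add: conjugate_eq_image)
    qed
    ultimately have "P' = P"
      using card_subset_eq[OF _ _ card_P'] finite_subset[OF PG fin] by simp
    then show ?thesis
      using g PG by (simp add: mem_normalizer_iff P'_def)
  qed
  then show ?thesis
    using normalizer_imp_subgroup[OF PG] subgroup.subset by blast
qed

lemma frattini_argument:
  assumes fin: "finite (carrier G)" and M: "M \<lhd> G" and q: "Factorial_Ring.prime q"
    and T: "subgroup T G" "T \<subseteq> M" "card T = q ^ multiplicity q (card M)"
  shows "M <#> normalizer G T = carrier G"
proof
  have MS: "subgroup M G"
    using M normal_imp_subgroup by blast
  have TG: "T \<subseteq> carrier G"
    using T(1) subgroup.subset by blast
  show "M <#> normalizer G T \<subseteq> carrier G"
    using set_mult_closed normalizer_imp_subgroup[OF TG] MS subgroup.subset by blast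
  show "carrier G \<subseteq> M <#> normalizer G T"
  proof
    fix g
    assume g: "g \<in> carrier G"
    define T' where "T' = g <# T #> inv g"
    have T'M: "T' \<subseteq> M"
      using T(2) g normal.inv_op_closed2[OF M] by (auto simp: T'_def conjugate_eq_image)
    have card_T': "card T' = card T"
      using card_conjugate[OF g TG] by (simp add: T'_def)
    obtain m where m: "m \<in> M" and sub: "m <# T' #> inv m \<subseteq> T"
      using sylow_conjugate_subset_in_subgroup[OF fin q MS T
          subgroup_conjugation_is_surj2[OF g T(1), folded T'_def] T'M card_T'[unfolded T(3)]] .
    have mG: "m \<in> carrier G"
      using m MS subgroup.subset by blast
    have "T' \<subseteq> carrier G"
      using T'M MS subgroup.subset by blast
    then have "card (m <# T' #> inv m) = card T"
      using card_conjugate[OF mG] card_T' by simp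
    then have "m <# T' #> inv m = T"
      using card_subset_eq[OF _ sub] fin TG finite_subset by blast
    then have "(m \<otimes> g) <# T #> inv (m \<otimes> g) = T"
      using conjugate_mult[OF mG g TG] by (simp add: T'_def)
    then have "m \<otimes> g \<in> normalizer G T"
      using mG g TG by (simp add: mem_normalizer_iff)
    moreover have "g = inv m \<otimes> (m \<otimes> g)"
      using mG g by (simp add: m_assoc[symmetric])
    moreover have "inv m \<in> M"
      using subgroup.m_inv_closed[OF MS m] .
    ultimately show "g \<in> M <#> normalizer G T"
      unfolding set_mult_def by blast
  qed
qed

lemma card_rcosets_dvd_card_normalizer:
  assumes fin: "finite (carrier G)" and M: "M \<lhd> G" and q: "Factorial_Ring.prime q"
    and T: "subgroup T G" "T \<subseteq> M" "card T = q ^ multiplicity q (card M)"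
  shows "card (rcosets M) dvd card (normalizer G T)"
proof -
  have MS: "subgroup M G"
    using M normal_imp_subgroup by blast
  define N where "N = normalizer G T"
  have NS: "subgroup N G"
    unfolding N_def using normalizer_imp_subgroup[OF subgroup.subset[OF T(1)]] .
  have "M #> g \<in> (\<lambda>a. M #> a) ` N" if g: "g \<in> carrier G" for g
  proof -
    obtain m n where "m \<in> M" "n \<in> N" "g = m \<otimes> n"
      using frattini_argument[OF fin M q T] g unfolding N_def set_mult_def by blast
    moreover have "m \<in> carrier G" "n \<in> carrier G"
      using \<open>m \<in> M\<close> \<open>n \<in> N\<close> MS NS subgroup.subset by auto
    ultimately have "M #> g = M #> n"
      using subgroup.subset[OF MS] subgroup.rcos_const[OF MS is_group]
      by (simp add: coset_mult_assoc[symmetric])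
    then show ?thesis
      using \<open>n \<in> N\<close> by blast
  qed
  then have "(\<lambda>a. M #> a) ` N = carrier (G Mod M)"
    using subgroup.subset[OF NS] by (auto simp: carrier_FactGroup)
  then have "order (G Mod M) dvd order (G\<lparr>carrier := N\<rparr>)"
    using group_hom.order_dvd_of_surj[OF group_hom.induced_group_hom'[OF normal.group_hom_rcoset[OF M] NS]]
    by simp
  then show ?thesis
    by (simp add: N_def order_def FactGroup_def)
qed

lemma exists_centralized_nontrivial:
  assumes fin: "finite (carrier G)" and r: "Factorial_Ring.prime r"
    and R: "subgroup R G" "card R = r ^ a"
    and S: "subgroup S G" "\<not> r dvd card S - 1"
    and normalizes: "R \<subseteq> normalizer G S"
  obtains t where "t \<in> S" "t \<noteq> \<one>" "\<forall>g \<in> R. g \<otimes> t = t \<otimes> g"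
proof -
  have RG: "R \<subseteq> carrier G" and SG: "S \<subseteq> carrier G"
    using R(1) S(1) subgroup.subset by auto
  interpret action: group_action "G\<lparr>carrier := R\<rparr>" S "\<lambda>g. restrict (\<lambda>t. g \<otimes> t \<otimes> inv g) S"
    using group_action_conjugation[OF R(1) SG normalizes] .
  have "finite S"
    using fin SG finite_subset by blast
  define F where "F = {t \<in> S. \<forall>g \<in> R. g \<otimes> t \<otimes> inv g = t}"
  have "card F mod r = card S mod r"
    using action.card_fixed_points_mod[OF \<open>finite S\<close> r, of a] R(2)
    by (simp add: F_def order_def cong: conj_cong)
  also have "card S mod r \<noteq> 1"
  proof
    assume "card S mod r = 1"
    then have "r dvd card S - 1"
      using dvd_minus_mod[of r "card S"] by simp
    with S(2) show False ..
  qed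
  finally have "F \<noteq> {\<one>}"
    using prime_gt_1_nat[OF r] by auto
  moreover have "\<one> \<in> F"
    using subgroup.one_closed[OF S(1)] RG by (auto simp: F_def subsetD)
  ultimately obtain t where "t \<in> F" "t \<noteq> \<one>"
    by auto
  moreover have "g \<otimes> t = t \<otimes> g" if "t \<in> F" "g \<in> R" for g
  proof -
    have "g \<in> carrier G" "t \<in> carrier G"
      using that RG SG by (auto simp: F_def)
    moreover have "g \<otimes> t \<otimes> inv g = t"
      using that by (simp add: F_def)
    ultimately show ?thesis
      using conj_eq_self_iff_commute by blast
  qed
  moreover have "t \<in> S"
    using \<open>t \<in> F\<close> by (simp add: F_def)
  ultimately show thesis
    using that by blast
qed

end

section \<open>Elements of order p q\<close>

context group
begin

lemma exists_ord_mult_of_normalizer: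
  assumes fin: "finite (carrier G)"
    and r: "Factorial_Ring.prime r" and s: "Factorial_Ring.prime s" and "r \<noteq> s"
    and R: "subgroup R G" "card R = r ^ a" "a \<noteq> 0"
    and S: "subgroup S G" "card S = s ^ b" "\<not> r dvd card S - 1"
    and normalizes: "R \<subseteq> normalizer G S"
  obtains x where "x \<in> carrier G" "ord x = r * s"
proof -
  obtain t where t: "t \<in> S" "t \<noteq> \<one>" and central: "\<forall>g \<in> R. g \<otimes> t = t \<otimes> g"
    by (rule exists_centralized_nontrivial[OF fin r R(1,2) S(1,3) normalizes])
  have tG: "t \<in> carrier G"
    using subgroup.mem_carrier[OF S(1) t(1)] .
  have "finite S"
    using fin subgroup.subset[OF S(1)] finite_subset by blast
  then have "t [^] (s ^ b) = \<one>"
    using subgroup_pow_card_eq_one[OF S(1) _ t(1)] S(2) by simp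
  then obtain m :: nat where ord_y: "ord (t [^] m) = s"
    by (rule exists_pow_ord_prime[OF tG t(2) s])
  have "r dvd card R"
    using R(2,3) by simp
  then obtain x where x: "x \<in> R" "ord x = r"
    by (rule cauchy_subgroup[OF fin R(1) r])
  have xG: "x \<in> carrier G"
    using subgroup.mem_carrier[OF R(1) x(1)] .
  have "t \<otimes> x = x \<otimes> t"
    using central x(1) by simp
  then have comm: "x \<otimes> t [^] m = t [^] m \<otimes> x"
    using group_commutes_pow[OF _ tG xG] by simp
  have "coprime (ord x) (ord (t [^] m))"
    using x(2) ord_y primes_coprime[OF r s \<open>r \<noteq> s\<close>] by simp
  then have "ord (x \<otimes> t [^] m) = r * s"
    using ord_mult_coprime[OF xG _ comm] tG x(2) ord_y by simp
  moreover have "x \<otimes> t [^] m \<in> carrier G"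
    using xG tG by simp
  ultimately show thesis
    using that by blast
qed

lemma exists_ord_mult_of_abelian_normal:
  assumes fin: "finite (carrier G)" and A: "A \<lhd> G"
    and comm: "\<And>a b. a \<in> A \<Longrightarrow> b \<in> A \<Longrightarrow> a \<otimes> b = b \<otimes> a"
    and p: "Factorial_Ring.prime p" and q: "Factorial_Ring.prime q" and "p \<noteq> q"
    and "p dvd card A" and "q dvd order G"
    and coprime_powers: "\<And>i. 1 \<le> i \<Longrightarrow> i \<le> multiplicity p (order G) \<Longrightarrow> \<not> q dvd p ^ i - 1"
  obtains x where "x \<in> carrier G" "ord x = p * q"
proof -
  have AS: "subgroup A G"
    using A normal_imp_subgroup by blast
  have order_pos: "order G \<noteq> 0"
    using fin by (simp add: order_gt_0_iff_finite[symmetric])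
  obtain P where P: "subgroup P G" "P \<subseteq> A" "card P = p ^ multiplicity p (card A)"
    using exists_sylow_subgroup[OF fin AS p] by blast
  have v_pos: "multiplicity p (card A) \<noteq> 0"
    using card_subgroup_ne_zero[OF fin AS] \<open>p dvd card A\<close> p by (simp add: prime_multiplicity_gt_zero_iff)
  have "p ^ multiplicity p (card A) dvd order G"
    using card_subgroup_dvd[OF subgroup_self P(1) subgroup.subset[OF P(1)]] P(3) by (simp add: order_def)
  then have v_le: "multiplicity p (card A) \<le> multiplicity p (order G)"
    using order_pos p not_prime_unit by (blast intro: multiplicity_geI)
  obtain Y where Y: "subgroup Y G" "card Y = q ^ multiplicity q (order G)"
    using exists_sylow_subgroup[OF fin subgroup_self q] by (auto simp: order_def)
  have "multiplicity q (order G) \<noteq> 0"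
    using \<open>q dvd order G\<close> q order_pos by (simp add: prime_multiplicity_gt_zero_iff)
  moreover have "\<not> q dvd card P - 1"
    using coprime_powers[OF _ v_le] v_pos P(3) by simp
  moreover have "Y \<subseteq> normalizer G P"
    using normalizer_sylow_of_abelian_normal[OF fin A comm p P] Y(1) subgroup.subset by blast
  moreover have "q \<noteq> p"
    using \<open>p \<noteq> q\<close> by simp
  ultimately obtain x where "x \<in> carrier G" "ord x = q * p"
    using exists_ord_mult_of_normalizer[OF fin q p _ Y _ P(1,3)] by blast
  then show thesis
    using that by (simp add: mult.commute)
qed

lemma exists_ord_mult_of_normal_index:
  assumes fin: "finite (carrier G)" and M: "M \<lhd> G"
    and p: "Factorial_Ring.prime p" and q: "Factorial_Ring.prime q" and "p \<noteq> q"
    and "\<not> q dvd card (rcosets M)" and "p dvd card (rcosets M)"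
    and "\<not> p dvd q ^ multiplicity q (order G) - 1"
  obtains x where "x \<in> carrier G" "ord x = p * q"
proof -
  have MS: "subgroup M G"
    using M normal_imp_subgroup by blast
  obtain T where T: "subgroup T G" "T \<subseteq> M" "card T = q ^ multiplicity q (card M)"
    using exists_sylow_subgroup[OF fin MS q] by blast
  have "order G \<noteq> 0"
    using fin by (simp add: order_gt_0_iff_finite[symmetric])
  then have "multiplicity q (order G) = multiplicity q (card (rcosets M)) + multiplicity q (card M)"
    using lagrange[OF MS] q by (metis mult_is_0 prime_elem_multiplicity_mult_distrib prime_imp_prime_elem)
  then have card_T: "card T = q ^ multiplicity q (order G)"
    using T(3) \<open>\<not> q dvd card (rcosets M)\<close> by (simp add: not_dvd_imp_multiplicity_0)
  have TG: "T \<subseteq> carrier G"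
    using T(1) subgroup.subset by blast
  define N where "N = normalizer G T"
  have NS: "subgroup N G"
    unfolding N_def using normalizer_imp_subgroup[OF TG] .
  have "card (rcosets M) dvd card N"
    unfolding N_def using card_rcosets_dvd_card_normalizer[OF fin M q T] .
  with \<open>p dvd card (rcosets M)\<close> have "p dvd card N"
    by (rule dvd_trans)
  obtain P where P: "subgroup P G" "P \<subseteq> N" "card P = p ^ multiplicity p (card N)"
    using exists_sylow_subgroup[OF fin NS p] by blast
  have "multiplicity p (card N) \<noteq> 0"
    using card_subgroup_ne_zero[OF fin NS] \<open>p dvd card N\<close> p by (simp add: prime_multiplicity_gt_zero_iff)
  moreover have "\<not> p dvd card T - 1"
    using card_T \<open>\<not> p dvd q ^ multiplicity q (order G) - 1\<close> by simp
  ultimately show thesis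
    using exists_ord_mult_of_normalizer[OF fin p q \<open>p \<noteq> q\<close> P(1,3) _ T(1) card_T] P(2) that
    unfolding N_def by blast
qed

lemma exists_ord_mult_of_derived_quotient:
  assumes fin: "finite (carrier G)" and L: "L \<lhd> G" and p_dvd_L: "p * card (derived G L) dvd card L"
    and p: "Factorial_Ring.prime p" and q: "Factorial_Ring.prime q" and "p \<noteq> q"
    and "q dvd card (rcosets (derived G L))"
    and coprime_powers: "\<And>i. 1 \<le> i \<Longrightarrow> i \<le> multiplicity p (order G) \<Longrightarrow> \<not> q dvd p ^ i - 1"
  obtains x where "x \<in> carrier G" "ord x = p * q"
proof -
  define M where "M = derived G L"
  have LS: "subgroup L G"
    using L normal_imp_subgroup by blast
  interpret M: normal M G
    unfolding M_def using derived_is_normal[OF L] .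
  interpret quotient: group_hom G "G Mod M" "\<lambda>a. M #> a"
    by (rule M.group_hom_rcoset)
  define A where "A = (\<lambda>a. M #> a) ` L"
  have A_normal: "A \<lhd> G Mod M"
    unfolding A_def using normal.surj_hom_normal_subgroup[OF L M.group_hom_rcoset]
    by (simp add: carrier_FactGroup)
  have A_comm: "C \<otimes>\<^bsub>G Mod M\<^esub> D = D \<otimes>\<^bsub>G Mod M\<^esub> C" if "C \<in> A" "D \<in> A" for C D
    using M.FactGroup_image_commute[OF LS _ that[unfolded A_def]] by (simp add: M_def)
  have "card A * card M = card L"
    unfolding A_def M_def using lagrange_relative[OF _ LS derived_incl[OF subset_refl LS]]
    M.subgroup_axioms by (simp add: M_def)
  then have "p * card M dvd card A * card M"
    using p_dvd_L by (simp add: M_def)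
  then have "p dvd card A"
    using card_subgroup_ne_zero[OF fin M.subgroup_axioms] by simp
  have order_quotient: "order (G Mod M) = card (rcosets M)"
    by (simp add: order_def FactGroup_def)
  have "finite (carrier (G Mod M))"
    using fin by (simp add: carrier_FactGroup)
  have "order G \<noteq> 0"
    using fin by (simp add: order_gt_0_iff_finite[symmetric])
  then have "multiplicity p (order (G Mod M)) \<le> multiplicity p (order G)"
    using lagrange[OF M.subgroup_axioms] order_quotient by (metis dvd_imp_multiplicity_le dvd_triv_left)
  then have coprime_powers_quotient: "\<not> q dvd p ^ i - 1"
    if "1 \<le> i" "i \<le> multiplicity p (order (G Mod M))" for i
    using coprime_powers that by simp
  have "q dvd order (G Mod M)"
    using \<open>q dvd card (rcosets (derived G L))\<close> order_quotient by (simp add: M_def)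
  obtain z where z: "z \<in> carrier (G Mod M)" "group.ord (G Mod M) z = p * q"
    by (rule group.exists_ord_mult_of_abelian_normal[OF M.factorgroup_is_group
          \<open>finite (carrier (G Mod M))\<close> A_normal A_comm p q \<open>p \<noteq> q\<close> \<open>p dvd card A\<close>
          \<open>q dvd order (G Mod M)\<close> coprime_powers_quotient])
  then obtain g where g: "g \<in> carrier G" "z = M #> g"
    by (auto simp: carrier_FactGroup)
  then show thesis
    using quotient.exists_ord_eq_ord_image[OF fin g(1)] z(2) that by metis
qed

lemma derived_seq_trivial_of_solvable:
  assumes K: "subgroup K G" and solvable: "solvable (G\<lparr>carrier := K\<rparr>)"
  obtains n where "(derived G ^^ n) K = {\<one>}"
proof -
  interpret K: group "G\<lparr>carrier := K\<rparr>"
    using subgroup_imp_group[OF K] .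
  have sub: "(derived G ^^ i) K \<subseteq> K" for i
    by (induction i) (simp_all add: derived_incl[OF _ K])
  have "(derived (G\<lparr>carrier := K\<rparr>) ^^ i) K = (derived G ^^ i) K" for i
    by (induction i) (simp_all add: derived_consistent[OF sub K])
  then show thesis
    using that solvable K.solvable_iff_trivial_derived_seq by auto
qed

lemma exists_normal_prime_dvd_derived_index:
  assumes fin: "finite (carrier G)" and K: "K \<lhd> G" and solvable: "solvable (G\<lparr>carrier := K\<rparr>)"
    and p: "Factorial_Ring.prime p" and "p dvd card K"
  obtains L where "L \<lhd> G" "p * card (derived G L) dvd card L"
proof -
  define D where "D i = (derived G ^^ i) K" for i
  have KS: "subgroup K G"
    using K normal_imp_subgroup by blast
  have D_Suc: "D (Suc i) = derived G (D i)" for i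
    by (simp add: D_def)
  have D_normal: "D i \<lhd> G" for i
    by (induction i) (simp_all add: D_def K derived_is_normal)
  obtain n where "D n = {\<one>}"
    unfolding D_def using derived_seq_trivial_of_solvable[OF KS solvable] .
  show thesis
  proof (rule ccontr)
    assume "\<not> thesis"
    then have no_factor: "\<not> p * card (D (Suc i)) dvd card (D i)" for i
      using that D_normal D_Suc by metis
    have "p dvd card (D i)" for i
    proof (induction i)
      case 0
      then show ?case
        using \<open>p dvd card K\<close> by (simp add: D_def)
    next
      case (Suc i)
      obtain c where c: "card (D i) = card (D (Suc i)) * c"
        using card_subgroup_dvd[OF _ _ derived_incl] D_normal normal_imp_subgroup D_Suc
        by (metis dvdE subset_refl)
      then have "\<not> p dvd c"
        using no_factor[of i] by (metis mult.commute mult_dvd_mono dvd_refl)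
      then show ?case
        using Suc.IH c p by (simp add: prime_dvd_mult_iff)
    qed
    then have "p dvd card (D n)" .
    then show False
      using \<open>D n = {\<one>}\<close> p by simp
  qed
qed

lemma exists_ord_mult_of_solvable_normal:
  assumes fin: "finite (carrier G)" and K: "K \<lhd> G" and solvable: "solvable (G\<lparr>carrier := K\<rparr>)"
    and p: "Factorial_Ring.prime p" and q: "Factorial_Ring.prime q" and "p \<noteq> q"
    and "p dvd card K"
    and coprime_powers: "\<And>i. 1 \<le> i \<Longrightarrow> i \<le> multiplicity p (order G) \<Longrightarrow> \<not> q dvd p ^ i - 1"
    and coprime_power: "\<not> p dvd q ^ multiplicity q (order G) - 1"
  obtains x where "x \<in> carrier G" "ord x = p * q"
proof -
  obtain L where L: "L \<lhd> G" and p_dvd_L: "p * card (derived G L) dvd card L"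
    using exists_normal_prime_dvd_derived_index[OF fin K solvable p \<open>p dvd card K\<close>] by blast
  define M where "M = derived G L"
  have LS: "subgroup L G"
    using L normal_imp_subgroup by blast
  have M: "M \<lhd> G"
    unfolding M_def using derived_is_normal[OF L] .
  have MS: "subgroup M G"
    using M normal_imp_subgroup by blast
  have "card L dvd order G"
    using card_subgroup_dvd[OF subgroup_self LS subgroup.subset[OF LS]] by (simp add: order_def)
  then have "p * card M dvd card (rcosets M) * card M"
    using p_dvd_L lagrange[OF MS] by (simp add: M_def dvd_trans)
  then have p_dvd_index: "p dvd card (rcosets M)"
    using card_subgroup_ne_zero[OF fin MS] by simp
  show thesis
  proof (cases "q dvd card (rcosets M)")
    case True
    then show thesis
      using exists_ord_mult_of_derived_quotient[OF fin L p_dvd_L p q \<open>p \<noteq> q\<close> _ coprime_powers] that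
      unfolding M_def by blast
  next
    case False
    then show thesis
      using exists_ord_mult_of_normal_index[OF fin M p q \<open>p \<noteq> q\<close> False p_dvd_index coprime_power] that
      by blast
  qed
qed

end

section \<open>The prime graph\<close>

lemma finite_pi_grp:
  assumes "group G" "finite (carrier G)"
  shows "finite (pi_grp G)"
proof -
  have "order G \<noteq> 0"
    using monoid.order_gt_0_iff_finite[OF group.is_monoid[OF assms(1)]] assms(2) by simp
  then have "pi_grp G \<subseteq> {..order G}"
    by (auto simp: pi_grp_def pi_num_def dvd_imp_le)
  then show ?thesis
    using finite_subset by blast
qed

lemma gk_adj_of_mem_H_set:
  assumes "group G" and fin: "finite (carrier G)" and K: "K \<lhd> G"
    and solvable: "solvable (G\<lparr>carrier := K\<rparr>)"
    and "p \<in> pi_num (card K)" and "q \<in> H_set G p"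
  shows "gk_adj G p q"
proof -
  have p: "Factorial_Ring.prime p" "p dvd card K"
    using \<open>p \<in> pi_num (card K)\<close> by (auto simp: pi_num_def)
  have q_theta: "q \<in> theta G p" and p_theta_bar: "p \<in> theta_bar G q"
    using \<open>q \<in> H_set G p\<close> by (simp_all add: H_set_def)
  then have q_pi: "q \<in> pi_grp G" and "q \<noteq> p"
    and q_not_in: "q \<notin> (\<Union>i\<in>{1..w_grp G p}. pi_num (p ^ i - 1))"
    by (simp_all add: theta_def)
  then have q: "Factorial_Ring.prime q"
    by (simp add: pi_grp_def pi_num_def)
  have coprime_powers: "\<not> q dvd p ^ i - 1" if "1 \<le> i" "i \<le> multiplicity p (order G)" for i
    using q_not_in that q by (auto simp: w_grp_def pi_num_def)
  have coprime_power: "\<not> p dvd q ^ multiplicity q (order G) - 1"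
    using p_theta_bar p(1) by (simp add: theta_bar_def w_grp_def pi_num_def)
  have KS: "subgroup K G"
    using K normal_imp_subgroup by blast
  have "card K dvd order G"
    using group.card_subgroup_dvd[OF \<open>group G\<close> group.subgroup_self[OF \<open>group G\<close>] KS subgroup.subset[OF KS]]
    by (simp add: order_def)
  then have "p dvd order G"
    using p(2) by (rule dvd_trans[rotated])
  obtain x where "x \<in> carrier G" "group.ord G x = p * q"
    using group.exists_ord_mult_of_solvable_normal[OF \<open>group G\<close> fin K solvable p(1) q
        \<open>q \<noteq> p\<close>[symmetric] p(2) coprime_powers coprime_power] .
  moreover have "p \<in> pi_grp G"
    using p(1) \<open>p dvd order G\<close> by (simp add: pi_grp_def pi_num_def)
  ultimately show ?thesis
    unfolding gk_adj_def using q_pi \<open>q \<noteq> p\<close> by blast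
qed

theorem theorem2p12:
  fixes G :: "('a, 'b) monoid_scheme" and K :: "'a set" and p :: nat
  assumes "group G"
    and "finite (carrier G)"
    and "K \<lhd> G"
    and "solvable (G\<lparr>carrier := K\<rparr>)"
    and "p \<in> pi_grp G"
    and "gk_deg G p < card (H_set G p)"
  shows "p \<notin> pi_num (card K)"
proof
  assume "p \<in> pi_num (card K)"
  then have "H_set G p \<subseteq> {q. gk_adj G p q}"
    using gk_adj_of_mem_H_set[OF assms(1-4)] by blast
  moreover have "finite {q. gk_adj G p q}"
    using finite_pi_grp[OF assms(1,2)] by (rule finite_subset[rotated]) (auto simp: gk_adj_def)
  ultimately have "card (H_set G p) \<le> gk_deg G p"
    unfolding gk_deg_def by (rule card_mono[rotated])
  with assms(6) show False
    by simp
qed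

end
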